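(* Let $(\mathbb{X}, \otimes, K)$ be a differential category with coalgebra modality $(!, \delta, \varepsilon, \Delta, \mathsf{e})$ and deriving transformation $\mathsf{d}_A:!(A)\otimes A\to !(A)$, and let $(\mathsf{T}, \mu, \eta, \mathsf{n}, \mathsf{n}_{K})$ be a symmetric comonoidal monad on $(\mathbb{X}, \otimes, K)$ whose underlying endofunctor is additive. Then the following are in bijective correspondence: (1) Differential mixed distributive laws of $(\mathsf{T}, \mu, \eta, \mathsf{n}, \mathsf{n}_{K})$ over $(!, \delta, \varepsilon, \Delta, \mathsf{e}, \mathsf{d})$; (2) Liftings of $\mathsf{d}$ to $(\mathbb{X}^\mathsf{T}, \otimes^{\mathsf{n}}, (K,\mathsf{n}_K))$, that is, deriving transformations $\tilde{\mathsf{d}}$ for the lifted coalgebra modality $(\tilde{!}, \tilde{\delta}, \tilde{\varepsilon}, \tilde{\Delta}, \tilde{\mathsf{e}})$ on $(\mathbb{X}^\mathsf{T}, \otimes^{\mathsf{n}}, (K,\mathsf{n}_K))$ induced by the corresponding coalgebra mixed distributive law, such that for every $\mathsf{T}$-algebra $(A, \nu)$ the underlying map of $\tilde{\mathsf{d}}_{(A, \nu)}$ is $\mathsf{d}_A$. Consequently, if $\lambda$ is a differential mixed distributive law, then $(\mathbb{X}^\mathsf{T}, \otimes^{\mathsf{n}}, (K,\mathsf{n}_K))$ is a differential category with coalgebra modality $(\tilde{!}, \tilde{\delta}, \tilde{\varepsilon}, \tilde{\Delta}, \tilde{\mathsf{e}})$ and deriving transformation $\tilde{\mathsf{d}}$.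
   Context: Composition is in diagrammatic order. An additive symmetric monoidal category has hom-sets that are commutative monoids with composition and $\otimes$ preserving $+$ and $0$; an additive functor preserves $+$ and $0$ strictly. A differential category is an additive symmetric monoidal category with a coalgebra modality $(!,\delta,\varepsilon,\Delta,\mathsf{e})$ (a comonad with natural cocommutative comonoids $(!(A),\Delta_A,\mathsf{e}_A)$ such that $\delta_A$ is a comonoid morphism) and a deriving transformation $\mathsf{d}_A:!(A)\otimes A\to!(A)$ satisfying the axioms of Blute, Cockett and Seely. A symmetric comonoidal monad $(\mathsf{T},\mu,\eta,\mathsf{n},\mathsf{n}_K)$ has oplax structure $\mathsf{n}_{A,B}:\mathsf{T}(A\otimes B)\to\mathsf{T}(A)\otimes\mathsf{T}(B)$, $\mathsf{n}_K:\mathsf{T}(K)\to K$; $\mathbb{X}^\mathsf{T}$ has $(A,\nu)\otimes^\mathsf{n}(B,\nu')=(A\otimes B,\mathsf{n}_{A,B};(\nu\otimes\nu'))$ and unit $(K,\mathsf{n}_K)$, and is additive symmetric monoidal when $\mathsf{T}$ is additive. A coalgebra mixed distributive law is a natural $\lambda_A:\mathsf{T}!(A)\to!\mathsf{T}(A)$ with $\mu_{!(A)};\lambda_A=\mathsf{T}(\lambda_A);\lambda_{\mathsf{T}(A)};!(\mu_A)$, $\eta_{!(A)};\lambda_A=!(\eta_A)$, $\mathsf{T}(\delta_A);\lambda_{!(A)};!(\lambda_A)=\lambda_A;\delta_{\mathsf{T}(A)}$, $\lambda_A;\varepsilon_{\mathsf{T}(A)}=\mathsf{T}(\varepsilon_A)$,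 $\mathsf{T}(\Delta_A);\mathsf{n}_{!(A),!(A)};(\lambda_A\otimes\lambda_A)=\lambda_A;\Delta_{\mathsf{T}(A)}$, $\mathsf{T}(\mathsf{e}_A);\mathsf{n}_K=\lambda_A;\mathsf{e}_{\mathsf{T}(A)}$; it lifts the coalgebra modality via $\tilde{!}(A,\nu)=(!(A),\lambda_A;!(\nu))$. It is a differential mixed distributive law if moreover $\mathsf{n}_{!(A),A};(\lambda_A\otimes1_{\mathsf{T}(A)});\mathsf{d}_{\mathsf{T}(A)}=\mathsf{T}(\mathsf{d}_A);\lambda_A$. *)

theory Defs
  imports "HOL-Library.FuncSet"
begin

text \<open>Categories are represented by a set of objects, hom-sets (which may overlap;
  this is needed so that the Eilenberg-Moore category can reuse the morphisms of the
  base category), composition in DIAGRAMMATIC order (cmp C f g = f;g), identities,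
  and the additive symmetric monoidal data.\<close>

record ('o,'m) smcat =
  Obj  :: "'o set"
  Hom  :: "'o \<Rightarrow> 'o \<Rightarrow> 'm set"
  cmp  :: "'m \<Rightarrow> 'm \<Rightarrow> 'm"
  idn  :: "'o \<Rightarrow> 'm"
  tns  :: "'o \<Rightarrow> 'o \<Rightarrow> 'o"
  tnsm :: "'m \<Rightarrow> 'm \<Rightarrow> 'm"
  unt  :: "'o"
  asc  :: "'o \<Rightarrow> 'o \<Rightarrow> 'o \<Rightarrow> 'm"   \<comment> \<open>(A\<otimes>B)\<otimes>C \<rightarrow> A\<otimes>(B\<otimes>C)\<close>
  lun  :: "'o \<Rightarrow> 'm"
  run  :: "'o \<Rightarrow> 'm"
  brd  :: "'o \<Rightarrow> 'o \<Rightarrow> 'm"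
  zro  :: "'o \<Rightarrow> 'o \<Rightarrow> 'm"
  pls  :: "'m \<Rightarrow> 'm \<Rightarrow> 'm"

definition category :: "('o,'m) smcat \<Rightarrow> bool" where
  "category C \<longleftrightarrow>
     (\<forall>A B. Hom C A B \<noteq> {} \<longrightarrow> A \<in> Obj C \<and> B \<in> Obj C) \<and>
     (\<forall>A\<in>Obj C. idn C A \<in> Hom C A A) \<and>
     (\<forall>A B D f g. f \<in> Hom C A B \<longrightarrow> g \<in> Hom C B D \<longrightarrow> cmp C f g \<in> Hom C A D) \<and>
     (\<forall>A B f. f \<in> Hom C A B \<longrightarrow> cmp C (idn C A) f = f \<and> cmp C f (idn C B) = f) \<and>
     (\<forall>A B D E f g h. f \<in> Hom C A B \<longrightarrow> g \<in> Hom C B D \<longrightarrow> h \<in> Hom C D E \<longrightarrow>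
        cmp C (cmp C f g) h = cmp C f (cmp C g h))"

definition iso_in :: "('o,'m) smcat \<Rightarrow> 'o \<Rightarrow> 'o \<Rightarrow> 'm \<Rightarrow> bool" where
  "iso_in C A B f \<longleftrightarrow> f \<in> Hom C A B \<and>
     (\<exists>g\<in>Hom C B A. cmp C f g = idn C A \<and> cmp C g f = idn C B)"

definition inv_in :: "('o,'m) smcat \<Rightarrow> 'o \<Rightarrow> 'o \<Rightarrow> 'm \<Rightarrow> 'm" where
  "inv_in C A B f = (THE g. g \<in> Hom C B A \<and> cmp C f g = idn C A \<and> cmp C g f = idn C B)"

definition asc_inv :: "('o,'m) smcat \<Rightarrow> 'o \<Rightarrow> 'o \<Rightarrow> 'o \<Rightarrow> 'm" where
  "asc_inv C A B D = inv_in C (tns C (tns C A B) D) (tns C A (tns C B D)) (asc C A B D)"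

definition functor_on :: "('o,'m) smcat \<Rightarrow> ('o \<Rightarrow> 'o) \<Rightarrow> ('m \<Rightarrow> 'm) \<Rightarrow> bool" where
  "functor_on C Fo Fm \<longleftrightarrow>
     (\<forall>A\<in>Obj C. Fo A \<in> Obj C) \<and>
     (\<forall>A B f. f \<in> Hom C A B \<longrightarrow> Fm f \<in> Hom C (Fo A) (Fo B)) \<and>
     (\<forall>A\<in>Obj C. Fm (idn C A) = idn C (Fo A)) \<and>
     (\<forall>A B D f g. f \<in> Hom C A B \<longrightarrow> g \<in> Hom C B D \<longrightarrow> Fm (cmp C f g) = cmp C (Fm f) (Fm g))"

definition additive_functor :: "('o,'m) smcat \<Rightarrow> ('o \<Rightarrow> 'o) \<Rightarrow> ('m \<Rightarrow> 'm) \<Rightarrow> bool" where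
  "additive_functor C Fo Fm \<longleftrightarrow> functor_on C Fo Fm \<and>
     (\<forall>A B f g. f \<in> Hom C A B \<longrightarrow> g \<in> Hom C A B \<longrightarrow> Fm (pls C f g) = pls C (Fm f) (Fm g)) \<and>
     (\<forall>A\<in>Obj C. \<forall>B\<in>Obj C. Fm (zro C A B) = zro C (Fo A) (Fo B))"

definition nat_trans :: "('o,'m) smcat \<Rightarrow> ('o \<Rightarrow> 'o) \<Rightarrow> ('m \<Rightarrow> 'm) \<Rightarrow> ('o \<Rightarrow> 'o) \<Rightarrow> ('m \<Rightarrow> 'm)
    \<Rightarrow> ('o \<Rightarrow> 'm) \<Rightarrow> bool" where
  "nat_trans C Fo Fm Go Gm \<theta> \<longleftrightarrow>
     (\<forall>A\<in>Obj C. \<theta> A \<in> Hom C (Fo A) (Go A)) \<and>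
     (\<forall>A B f. f \<in> Hom C A B \<longrightarrow> cmp C (\<theta> A) (Gm f) = cmp C (Fm f) (\<theta> B))"

definition smc :: "('o,'m) smcat \<Rightarrow> bool" where
  "smc C \<longleftrightarrow> category C \<and> unt C \<in> Obj C \<and>
     (\<forall>A\<in>Obj C. \<forall>B\<in>Obj C. tns C A B \<in> Obj C) \<and>
     (\<forall>A B D E f g. f \<in> Hom C A B \<longrightarrow> g \<in> Hom C D E \<longrightarrow>
        tnsm C f g \<in> Hom C (tns C A D) (tns C B E)) \<and>
     (\<forall>A\<in>Obj C. \<forall>B\<in>Obj C. tnsm C (idn C A) (idn C B) = idn C (tns C A B)) \<and>
     (\<forall>A B D A' B' D' f g f' g'. f \<in> Hom C A B \<longrightarrow> g \<in> Hom C B D \<longrightarrow>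
        f' \<in> Hom C A' B' \<longrightarrow> g' \<in> Hom C B' D' \<longrightarrow>
        tnsm C (cmp C f g) (cmp C f' g') = cmp C (tnsm C f f') (tnsm C g g')) \<and>
     (\<forall>A\<in>Obj C. \<forall>B\<in>Obj C. \<forall>D\<in>Obj C.
        iso_in C (tns C (tns C A B) D) (tns C A (tns C B D)) (asc C A B D)) \<and>
     (\<forall>A\<in>Obj C. iso_in C (tns C (unt C) A) A (lun C A)) \<and>
     (\<forall>A\<in>Obj C. iso_in C (tns C A (unt C)) A (run C A)) \<and>
     (\<forall>A\<in>Obj C. \<forall>B\<in>Obj C. brd C A B \<in> Hom C (tns C A B) (tns C B A)) \<and>
     (\<forall>A A' B B' D D' f g h. f \<in> Hom C A A' \<longrightarrow> g \<in> Hom C B B' \<longrightarrow> h \<in> Hom C D D' \<longrightarrow>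
        cmp C (asc C A B D) (tnsm C f (tnsm C g h)) = cmp C (tnsm C (tnsm C f g) h) (asc C A' B' D')) \<and>
     (\<forall>A B f. f \<in> Hom C A B \<longrightarrow>
        cmp C (lun C A) f = cmp C (tnsm C (idn C (unt C)) f) (lun C B)) \<and>
     (\<forall>A B f. f \<in> Hom C A B \<longrightarrow>
        cmp C (run C A) f = cmp C (tnsm C f (idn C (unt C))) (run C B)) \<and>
     (\<forall>A A' B B' f g. f \<in> Hom C A A' \<longrightarrow> g \<in> Hom C B B' \<longrightarrow>
        cmp C (brd C A B) (tnsm C g f) = cmp C (tnsm C f g) (brd C A' B')) \<and>
     (\<forall>A\<in>Obj C. \<forall>B\<in>Obj C. \<forall>D\<in>Obj C. \<forall>E\<in>Obj C.
        cmp C (asc C (tns C A B) D E) (asc C A B (tns C D E)) =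
        cmp C (tnsm C (asc C A B D) (idn C E))
          (cmp C (asc C A (tns C B D) E) (tnsm C (idn C A) (asc C B D E)))) \<and>
     (\<forall>A\<in>Obj C. \<forall>B\<in>Obj C.
        cmp C (asc C A (unt C) B) (tnsm C (idn C A) (lun C B)) = tnsm C (run C A) (idn C B)) \<and>
     (\<forall>A\<in>Obj C. \<forall>B\<in>Obj C. \<forall>D\<in>Obj C.
        cmp C (asc C A B D) (cmp C (brd C A (tns C B D)) (asc C B D A)) =
        cmp C (tnsm C (brd C A B) (idn C D))
          (cmp C (asc C B A D) (tnsm C (idn C B) (brd C A D)))) \<and>
     (\<forall>A\<in>Obj C. \<forall>B\<in>Obj C. cmp C (brd C A B) (brd C B A) = idn C (tns C A B))"

definition additive :: "('o,'m) smcat \<Rightarrow> bool" where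
  "additive C \<longleftrightarrow>
     (\<forall>A\<in>Obj C. \<forall>B\<in>Obj C. zro C A B \<in> Hom C A B) \<and>
     (\<forall>A B f g. f \<in> Hom C A B \<longrightarrow> g \<in> Hom C A B \<longrightarrow> pls C f g \<in> Hom C A B) \<and>
     (\<forall>A B f g h. f \<in> Hom C A B \<longrightarrow> g \<in> Hom C A B \<longrightarrow> h \<in> Hom C A B \<longrightarrow>
        pls C (pls C f g) h = pls C f (pls C g h)) \<and>
     (\<forall>A B f g. f \<in> Hom C A B \<longrightarrow> g \<in> Hom C A B \<longrightarrow> pls C f g = pls C g f) \<and>
     (\<forall>A B f. f \<in> Hom C A B \<longrightarrow> pls C f (zro C A B) = f) \<and>
     (\<forall>A B D f g g'. f \<in> Hom C A B \<longrightarrow> g \<in> Hom C B D \<longrightarrow> g' \<in> Hom C B D \<longrightarrow>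
        cmp C f (pls C g g') = pls C (cmp C f g) (cmp C f g')) \<and>
     (\<forall>A B D f. f \<in> Hom C A B \<longrightarrow> D \<in> Obj C \<longrightarrow> cmp C f (zro C B D) = zro C A D) \<and>
     (\<forall>A B D g g' h. g \<in> Hom C A B \<longrightarrow> g' \<in> Hom C A B \<longrightarrow> h \<in> Hom C B D \<longrightarrow>
        cmp C (pls C g g') h = pls C (cmp C g h) (cmp C g' h)) \<and>
     (\<forall>A B D h. h \<in> Hom C B D \<longrightarrow> A \<in> Obj C \<longrightarrow> cmp C (zro C A B) h = zro C A D) \<and>
     (\<forall>A B D E f g g'. f \<in> Hom C A B \<longrightarrow> g \<in> Hom C D E \<longrightarrow> g' \<in> Hom C D E \<longrightarrow>
        tnsm C f (pls C g g') = pls C (tnsm C f g) (tnsm C f g') \<and>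
        tnsm C (pls C g g') f = pls C (tnsm C g f) (tnsm C g' f)) \<and>
     (\<forall>A B D E f. f \<in> Hom C A B \<longrightarrow> D \<in> Obj C \<longrightarrow> E \<in> Obj C \<longrightarrow>
        tnsm C f (zro C D E) = zro C (tns C A D) (tns C B E) \<and>
        tnsm C (zro C D E) f = zro C (tns C D A) (tns C E B))"

definition additive_smc :: "('o,'m) smcat \<Rightarrow> bool" where
  "additive_smc C \<longleftrightarrow> smc C \<and> additive C"

text \<open>Coalgebra modality (!, \<delta>, \<epsilon>, \<Delta>, e): Bo/Bm the object/morphism part of !.\<close>
definition coalgebra_modality :: "('o,'m) smcat \<Rightarrow> ('o \<Rightarrow> 'o) \<Rightarrow> ('m \<Rightarrow> 'm) \<Rightarrow>
    ('o \<Rightarrow> 'm) \<Rightarrow> ('o \<Rightarrow> 'm) \<Rightarrow> ('o \<Rightarrow> 'm) \<Rightarrow> ('o \<Rightarrow> 'm) \<Rightarrow> bool" where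
  "coalgebra_modality C Bo Bm dl ep De ee \<longleftrightarrow>
     functor_on C Bo Bm \<and>
     nat_trans C Bo Bm (\<lambda>A. Bo (Bo A)) (\<lambda>f. Bm (Bm f)) dl \<and>
     nat_trans C Bo Bm (\<lambda>A. A) (\<lambda>f. f) ep \<and>
     nat_trans C Bo Bm (\<lambda>A. tns C (Bo A) (Bo A)) (\<lambda>f. tnsm C (Bm f) (Bm f)) De \<and>
     nat_trans C Bo Bm (\<lambda>A. unt C) (\<lambda>f. idn C (unt C)) ee \<and>
     (\<forall>A\<in>Obj C.
        cmp C (dl A) (dl (Bo A)) = cmp C (dl A) (Bm (dl A)) \<and>
        cmp C (dl A) (ep (Bo A)) = idn C (Bo A) \<and>
        cmp C (dl A) (Bm (ep A)) = idn C (Bo A) \<and>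
        cmp C (De A) (cmp C (tnsm C (De A) (idn C (Bo A))) (asc C (Bo A) (Bo A) (Bo A))) =
          cmp C (De A) (tnsm C (idn C (Bo A)) (De A)) \<and>
        cmp C (De A) (cmp C (tnsm C (ee A) (idn C (Bo A))) (lun C (Bo A))) = idn C (Bo A) \<and>
        cmp C (De A) (cmp C (tnsm C (idn C (Bo A)) (ee A)) (run C (Bo A))) = idn C (Bo A) \<and>
        cmp C (De A) (brd C (Bo A) (Bo A)) = De A \<and>
        cmp C (dl A) (De (Bo A)) = cmp C (De A) (tnsm C (dl A) (dl A)) \<and>
        cmp C (dl A) (ee (Bo A)) = ee A)"

text \<open>Deriving transformation d_A : !A \<otimes> A \<rightarrow> !A with axioms [d.1]-[d.5]
  (constant, Leibniz, linear, chain, interchange rules).\<close>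
definition deriving_transformation :: "('o,'m) smcat \<Rightarrow> ('o \<Rightarrow> 'o) \<Rightarrow> ('m \<Rightarrow> 'm) \<Rightarrow>
    ('o \<Rightarrow> 'm) \<Rightarrow> ('o \<Rightarrow> 'm) \<Rightarrow> ('o \<Rightarrow> 'm) \<Rightarrow> ('o \<Rightarrow> 'm) \<Rightarrow> ('o \<Rightarrow> 'm) \<Rightarrow> bool" where
  "deriving_transformation C Bo Bm dl ep De ee d \<longleftrightarrow>
     nat_trans C (\<lambda>A. tns C (Bo A) A) (\<lambda>f. tnsm C (Bm f) f) Bo Bm d \<and>
     (\<forall>A\<in>Obj C.
        cmp C (d A) (ee A) = zro C (tns C (Bo A) A) (unt C) \<and>
        cmp C (d A) (De A) =
          pls C (cmp C (tnsm C (De A) (idn C A))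
                   (cmp C (asc C (Bo A) (Bo A) A) (tnsm C (idn C (Bo A)) (d A))))
                (cmp C (tnsm C (De A) (idn C A))
                   (cmp C (asc C (Bo A) (Bo A) A)
                     (cmp C (tnsm C (idn C (Bo A)) (brd C (Bo A) A))
                       (cmp C (asc_inv C (Bo A) A (Bo A)) (tnsm C (d A) (idn C (Bo A))))))) \<and>
        cmp C (d A) (ep A) = cmp C (tnsm C (ee A) (idn C A)) (lun C A) \<and>
        cmp C (d A) (dl A) =
          cmp C (tnsm C (De A) (idn C A))
            (cmp C (asc C (Bo A) (Bo A) A) (cmp C (tnsm C (dl A) (d A)) (d (Bo A)))) \<and>
        cmp C (tnsm C (d A) (idn C A)) (d A) =
          cmp C (asc C (Bo A) A A)
            (cmp C (tnsm C (idn C (Bo A)) (brd C A A))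
              (cmp C (asc_inv C (Bo A) A A) (cmp C (tnsm C (d A) (idn C A)) (d A)))))"

definition differential_category :: "('o,'m) smcat \<Rightarrow> ('o \<Rightarrow> 'o) \<Rightarrow> ('m \<Rightarrow> 'm) \<Rightarrow>
    ('o \<Rightarrow> 'm) \<Rightarrow> ('o \<Rightarrow> 'm) \<Rightarrow> ('o \<Rightarrow> 'm) \<Rightarrow> ('o \<Rightarrow> 'm) \<Rightarrow> ('o \<Rightarrow> 'm) \<Rightarrow> bool" where
  "differential_category C Bo Bm dl ep De ee d \<longleftrightarrow>
     additive_smc C \<and> coalgebra_modality C Bo Bm dl ep De ee \<and>
     deriving_transformation C Bo Bm dl ep De ee d"

definition sc_monad :: "('o,'m) smcat \<Rightarrow> ('o \<Rightarrow> 'o) \<Rightarrow> ('m \<Rightarrow> 'm) \<Rightarrow>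
    ('o \<Rightarrow> 'm) \<Rightarrow> ('o \<Rightarrow> 'm) \<Rightarrow> ('o \<Rightarrow> 'o \<Rightarrow> 'm) \<Rightarrow> 'm \<Rightarrow> bool" where
  "sc_monad C To Tm mu eta n nK \<longleftrightarrow>
     functor_on C To Tm \<and>
     nat_trans C (\<lambda>A. To (To A)) (\<lambda>f. Tm (Tm f)) To Tm mu \<and>
     nat_trans C (\<lambda>A. A) (\<lambda>f. f) To Tm eta \<and>
     (\<forall>A\<in>Obj C.
        cmp C (Tm (mu A)) (mu A) = cmp C (mu (To A)) (mu A) \<and>
        cmp C (eta (To A)) (mu A) = idn C (To A) \<and>
        cmp C (Tm (eta A)) (mu A) = idn C (To A)) \<and>
     (\<forall>A\<in>Obj C. \<forall>B\<in>Obj C. n A B \<in> Hom C (To (tns C A B)) (tns C (To A) (To B))) \<and>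
     nK \<in> Hom C (To (unt C)) (unt C) \<and>
     (\<forall>A A' B B' f g. f \<in> Hom C A A' \<longrightarrow> g \<in> Hom C B B' \<longrightarrow>
        cmp C (Tm (tnsm C f g)) (n A' B') = cmp C (n A B) (tnsm C (Tm f) (Tm g))) \<and>
     (\<forall>A\<in>Obj C. \<forall>B\<in>Obj C. \<forall>D\<in>Obj C.
        cmp C (Tm (asc C A B D)) (cmp C (n A (tns C B D)) (tnsm C (idn C (To A)) (n B D))) =
        cmp C (n (tns C A B) D) (cmp C (tnsm C (n A B) (idn C (To D))) (asc C (To A) (To B) (To D)))) \<and>
     (\<forall>A\<in>Obj C.
        Tm (lun C A) = cmp C (n (unt C) A) (cmp C (tnsm C nK (idn C (To A))) (lun C (To A))) \<and>
        Tm (run C A) = cmp C (n A (unt C)) (cmp C (tnsm C (idn C (To A)) nK) (run C (To A)))) \<and>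
     (\<forall>A\<in>Obj C. \<forall>B\<in>Obj C.
        cmp C (Tm (brd C A B)) (n B A) = cmp C (n A B) (brd C (To A) (To B))) \<and>
     (\<forall>A\<in>Obj C. \<forall>B\<in>Obj C.
        cmp C (mu (tns C A B)) (n A B) =
          cmp C (Tm (n A B)) (cmp C (n (To A) (To B)) (tnsm C (mu A) (mu B))) \<and>
        cmp C (eta (tns C A B)) (n A B) = tnsm C (eta A) (eta B)) \<and>
     cmp C (mu (unt C)) nK = cmp C (Tm nK) nK \<and>
     cmp C (eta (unt C)) nK = idn C (unt C)"

definition em_obj :: "('o,'m) smcat \<Rightarrow> ('o \<Rightarrow> 'o) \<Rightarrow> ('m \<Rightarrow> 'm) \<Rightarrow>
    ('o \<Rightarrow> 'm) \<Rightarrow> ('o \<Rightarrow> 'm) \<Rightarrow> ('o \<times> 'm) set" where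
  "em_obj C To Tm mu eta = {(A, v). A \<in> Obj C \<and> v \<in> Hom C (To A) A \<and>
      cmp C (eta A) v = idn C A \<and> cmp C (mu A) v = cmp C (Tm v) v}"

definition em :: "('o,'m) smcat \<Rightarrow> ('o \<Rightarrow> 'o) \<Rightarrow> ('m \<Rightarrow> 'm) \<Rightarrow>
    ('o \<Rightarrow> 'm) \<Rightarrow> ('o \<Rightarrow> 'm) \<Rightarrow> ('o \<Rightarrow> 'o \<Rightarrow> 'm) \<Rightarrow> 'm \<Rightarrow> ('o \<times> 'm, 'm) smcat" where
  "em C To Tm mu eta n nK = \<lparr>
     Obj = em_obj C To Tm mu eta,
     Hom = (\<lambda>(A, v) (B, w). {f \<in> Hom C A B. (A, v) \<in> em_obj C To Tm mu eta \<and>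
              (B, w) \<in> em_obj C To Tm mu eta \<and> cmp C v f = cmp C (Tm f) w}),
     cmp = cmp C,
     idn = (\<lambda>(A, v). idn C A),
     tns = (\<lambda>(A, v) (B, w). (tns C A B, cmp C (n A B) (tnsm C v w))),
     tnsm = tnsm C,
     unt = (unt C, nK),
     asc = (\<lambda>(A, v) (B, w) (D, u). asc C A B D),
     lun = (\<lambda>(A, v). lun C A),
     run = (\<lambda>(A, v). run C A),
     brd = (\<lambda>(A, v) (B, w). brd C A B),
     zro = (\<lambda>(A, v) (B, w). zro C A B),
     pls = pls C \<rparr>"

definition coalg_mdl :: "('o,'m) smcat \<Rightarrow> ('o \<Rightarrow> 'o) \<Rightarrow> ('m \<Rightarrow> 'm) \<Rightarrow>
    ('o \<Rightarrow> 'm) \<Rightarrow> ('o \<Rightarrow> 'm) \<Rightarrow> ('o \<Rightarrow> 'o \<Rightarrow> 'm) \<Rightarrow> 'm \<Rightarrow>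
    ('o \<Rightarrow> 'o) \<Rightarrow> ('m \<Rightarrow> 'm) \<Rightarrow> ('o \<Rightarrow> 'm) \<Rightarrow> ('o \<Rightarrow> 'm) \<Rightarrow> ('o \<Rightarrow> 'm) \<Rightarrow> ('o \<Rightarrow> 'm) \<Rightarrow>
    ('o \<Rightarrow> 'm) \<Rightarrow> bool" where
  "coalg_mdl C To Tm mu eta n nK Bo Bm dl ep De ee lam \<longleftrightarrow>
     nat_trans C (\<lambda>A. To (Bo A)) (\<lambda>f. Tm (Bm f)) (\<lambda>A. Bo (To A)) (\<lambda>f. Bm (Tm f)) lam \<and>
     (\<forall>A\<in>Obj C.
        cmp C (mu (Bo A)) (lam A) = cmp C (Tm (lam A)) (cmp C (lam (To A)) (Bm (mu A))) \<and>
        cmp C (eta (Bo A)) (lam A) = Bm (eta A) \<and>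
        cmp C (Tm (dl A)) (cmp C (lam (Bo A)) (Bm (lam A))) = cmp C (lam A) (dl (To A)) \<and>
        cmp C (lam A) (ep (To A)) = Tm (ep A) \<and>
        cmp C (Tm (De A)) (cmp C (n (Bo A) (Bo A)) (tnsm C (lam A) (lam A))) =
          cmp C (lam A) (De (To A)) \<and>
        cmp C (Tm (ee A)) nK = cmp C (lam A) (ee (To A)))"

definition differential_mdl_cond :: "('o,'m) smcat \<Rightarrow> ('o \<Rightarrow> 'o) \<Rightarrow> ('m \<Rightarrow> 'm) \<Rightarrow>
    ('o \<Rightarrow> 'o \<Rightarrow> 'm) \<Rightarrow> ('o \<Rightarrow> 'o) \<Rightarrow> ('o \<Rightarrow> 'm) \<Rightarrow> ('o \<Rightarrow> 'm) \<Rightarrow> bool" where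
  "differential_mdl_cond C To Tm n Bo d lam \<longleftrightarrow>
     (\<forall>A\<in>Obj C. cmp C (n (Bo A) A) (cmp C (tnsm C (lam A) (idn C (To A))) (d (To A))) =
                 cmp C (Tm (d A)) (lam A))"

definition differential_mdl :: "('o,'m) smcat \<Rightarrow> ('o \<Rightarrow> 'o) \<Rightarrow> ('m \<Rightarrow> 'm) \<Rightarrow>
    ('o \<Rightarrow> 'm) \<Rightarrow> ('o \<Rightarrow> 'm) \<Rightarrow> ('o \<Rightarrow> 'o \<Rightarrow> 'm) \<Rightarrow> 'm \<Rightarrow>
    ('o \<Rightarrow> 'o) \<Rightarrow> ('m \<Rightarrow> 'm) \<Rightarrow> ('o \<Rightarrow> 'm) \<Rightarrow> ('o \<Rightarrow> 'm) \<Rightarrow> ('o \<Rightarrow> 'm) \<Rightarrow> ('o \<Rightarrow> 'm) \<Rightarrow>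
    ('o \<Rightarrow> 'm) \<Rightarrow> ('o \<Rightarrow> 'm) \<Rightarrow> bool" where
  "differential_mdl C To Tm mu eta n nK Bo Bm dl ep De ee d lam \<longleftrightarrow>
     coalg_mdl C To Tm mu eta n nK Bo Bm dl ep De ee lam \<and>
     differential_mdl_cond C To Tm n Bo d lam"

text \<open>Object part of the lifted functor: (A,\<nu>) \<mapsto> (!A, \<lambda>_A ; !\<nu>); on morphisms
  the lifting acts as !, and \<delta>, \<epsilon>, \<Delta>, e lift componentwise to the same maps.\<close>
definition lift_bang :: "('o,'m) smcat \<Rightarrow> ('o \<Rightarrow> 'o) \<Rightarrow> ('m \<Rightarrow> 'm) \<Rightarrow> ('o \<Rightarrow> 'm) \<Rightarrow>
    'o \<times> 'm \<Rightarrow> 'o \<times> 'm" where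
  "lift_bang C Bo Bm lam = (\<lambda>(A, v). (Bo A, cmp C (lam A) (Bm v)))"

end

(*
  The Eilenberg-Moore category X^T reuses everything of X: composition, tensor of maps,
  structure isomorphisms and sums are those of X, and the comonoidal structure n of T is
  exactly what makes the structure maps T-algebra morphisms. Likewise the axioms of a
  coalgebra mixed distributive law lambda say that delta, epsilon, Delta and e are T-algebra
  morphisms between the lifted algebras (!A, lambda_A ; !nu). Hence a lift of d, whose
  components are forced to be the d_A, exists iff every d_A is a T-algebra morphism
  !(A, nu) (x) (A, nu) -> !(A, nu); all equational axioms then hold because they hold in X.
  The differential condition on lambda together with naturality of d gives this for every
  algebra; conversely, it holds at the free algebra (TA, mu_A), and precomposing that
  equation with T(!eta_A (x) eta_A) recovers the differential condition at A.
*)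
theory Submission
  imports Defs
begin

(* Typing rules: side conditions of conditional rewrites such as comp_assoc are discharged by
   (rule hom)+, so (subst comp_assoc, (rule hom)+ | rule refl)+ normalises composites to the
   right. *)
named_theorems hom "typing rules for objects and morphisms"

locale smc_category =
  fixes C :: "('o,'m) smcat"
  assumes smc: "smc C"
begin

abbreviation comp (infixr "\<cdot>" 70) where "f \<cdot> g \<equiv> cmp C f g"
abbreviation tensor (infixr "\<otimes>" 75) where "f \<otimes> g \<equiv> tnsm C f g"

lemma category: "category C"
  using smc unfolding smc_def by blast

lemma hom_objs: "Hom C A B \<noteq> {} \<Longrightarrow> A \<in> Obj C \<and> B \<in> Obj C"
  and idn_hom [hom]: "A \<in> Obj C \<Longrightarrow> idn C A \<in> Hom C A A"
  and comp_hom [hom]: "f \<in> Hom C A B \<Longrightarrow> g \<in> Hom C B D \<Longrightarrow> f \<cdot> g \<in> Hom C A D"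
  and comp_idn_left: "f \<in> Hom C A B \<Longrightarrow> idn C A \<cdot> f = f"
  and comp_idn_right: "f \<in> Hom C A B \<Longrightarrow> f \<cdot> idn C B = f"
  and comp_assoc: "f \<in> Hom C A B \<Longrightarrow> g \<in> Hom C B D \<Longrightarrow> h \<in> Hom C D E \<Longrightarrow>
     (f \<cdot> g) \<cdot> h = f \<cdot> (g \<cdot> h)"
  using category unfolding category_def by blast+

lemma unt_obj [hom]: "unt C \<in> Obj C"
  and tns_obj [hom]: "A \<in> Obj C \<Longrightarrow> B \<in> Obj C \<Longrightarrow> tns C A B \<in> Obj C"
  and tnsm_hom [hom]: "f \<in> Hom C A B \<Longrightarrow> g \<in> Hom C D E \<Longrightarrow> f \<otimes> g \<in> Hom C (tns C A D) (tns C B E)"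
  and tnsm_idn: "A \<in> Obj C \<Longrightarrow> B \<in> Obj C \<Longrightarrow> idn C A \<otimes> idn C B = idn C (tns C A B)"
  and tnsm_comp: "f \<in> Hom C A B \<Longrightarrow> g \<in> Hom C B D \<Longrightarrow> f' \<in> Hom C A' B' \<Longrightarrow> g' \<in> Hom C B' D' \<Longrightarrow>
     (f \<cdot> g) \<otimes> (f' \<cdot> g') = (f \<otimes> f') \<cdot> (g \<otimes> g')"
  and asc_iso: "A \<in> Obj C \<Longrightarrow> B \<in> Obj C \<Longrightarrow> D \<in> Obj C \<Longrightarrow>
     iso_in C (tns C (tns C A B) D) (tns C A (tns C B D)) (asc C A B D)"
  and lun_iso: "A \<in> Obj C \<Longrightarrow> iso_in C (tns C (unt C) A) A (lun C A)"
  and run_iso: "A \<in> Obj C \<Longrightarrow> iso_in C (tns C A (unt C)) A (run C A)"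
  and brd_hom [hom]: "A \<in> Obj C \<Longrightarrow> B \<in> Obj C \<Longrightarrow> brd C A B \<in> Hom C (tns C A B) (tns C B A)"
  and asc_natural: "f \<in> Hom C A A' \<Longrightarrow> g \<in> Hom C B B' \<Longrightarrow> h \<in> Hom C D D' \<Longrightarrow>
     asc C A B D \<cdot> (f \<otimes> (g \<otimes> h)) = ((f \<otimes> g) \<otimes> h) \<cdot> asc C A' B' D'"
  and lun_natural: "f \<in> Hom C A B \<Longrightarrow> lun C A \<cdot> f = (idn C (unt C) \<otimes> f) \<cdot> lun C B"
  and run_natural: "f \<in> Hom C A B \<Longrightarrow> run C A \<cdot> f = (f \<otimes> idn C (unt C)) \<cdot> run C B"
  and brd_natural: "f \<in> Hom C A A' \<Longrightarrow> g \<in> Hom C B B' \<Longrightarrow>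
     brd C A B \<cdot> (g \<otimes> f) = (f \<otimes> g) \<cdot> brd C A' B'"
  and pentagon: "A \<in> Obj C \<Longrightarrow> B \<in> Obj C \<Longrightarrow> D \<in> Obj C \<Longrightarrow> E \<in> Obj C \<Longrightarrow>
     asc C (tns C A B) D E \<cdot> asc C A B (tns C D E) =
     (asc C A B D \<otimes> idn C E) \<cdot> (asc C A (tns C B D) E \<cdot> (idn C A \<otimes> asc C B D E))"
  and triangle: "A \<in> Obj C \<Longrightarrow> B \<in> Obj C \<Longrightarrow>
     asc C A (unt C) B \<cdot> (idn C A \<otimes> lun C B) = run C A \<otimes> idn C B"
  and hexagon: "A \<in> Obj C \<Longrightarrow> B \<in> Obj C \<Longrightarrow> D \<in> Obj C \<Longrightarrow>
     asc C A B D \<cdot> (brd C A (tns C B D) \<cdot> asc C B D A) =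
     (brd C A B \<otimes> idn C D) \<cdot> (asc C B A D \<cdot> (idn C B \<otimes> brd C A D))"
  and brd_brd: "A \<in> Obj C \<Longrightarrow> B \<in> Obj C \<Longrightarrow> brd C A B \<cdot> brd C B A = idn C (tns C A B)"
  using smc unfolding smc_def by simp_all

lemma tnsm_as_comp:
  assumes "f \<in> Hom C A B" and "g \<in> Hom C D E"
  shows "f \<otimes> g = (f \<otimes> idn C D) \<cdot> (idn C B \<otimes> g)"
    and "f \<otimes> g = (idn C A \<otimes> g) \<cdot> (f \<otimes> idn C E)"
  using tnsm_comp[OF assms(1) idn_hom idn_hom assms(2)]
    tnsm_comp[OF idn_hom assms(1) assms(2) idn_hom]
    assms hom_objs by (auto simp: comp_idn_left comp_idn_right)

lemma iso_in_hom: "iso_in C A B f \<Longrightarrow> f \<in> Hom C A B"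
  unfolding iso_in_def by blast

lemma asc_hom [hom]: "A \<in> Obj C \<Longrightarrow> B \<in> Obj C \<Longrightarrow> D \<in> Obj C \<Longrightarrow>
    asc C A B D \<in> Hom C (tns C (tns C A B) D) (tns C A (tns C B D))"
  and lun_hom [hom]: "A \<in> Obj C \<Longrightarrow> lun C A \<in> Hom C (tns C (unt C) A) A"
  and run_hom [hom]: "A \<in> Obj C \<Longrightarrow> run C A \<in> Hom C (tns C A (unt C)) A"
  by (simp_all add: iso_in_hom asc_iso lun_iso run_iso)

lemma inv_in_eqI:
  assumes "iso_in C A B f" and "g \<in> Hom C B A" and "f \<cdot> g = idn C A" and "g \<cdot> f = idn C B"
  shows "inv_in C A B f = g"
  unfolding inv_in_def
proof (rule the_equality)
  show "g \<in> Hom C B A \<and> f \<cdot> g = idn C A \<and> g \<cdot> f = idn C B"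
    using assms(2-4) by blast
next
  fix g' assume "g' \<in> Hom C B A \<and> f \<cdot> g' = idn C A \<and> g' \<cdot> f = idn C B"
  then have g': "g' \<in> Hom C B A" and "g' \<cdot> f = idn C B" by blast+
  have f: "f \<in> Hom C A B" using assms(1) by (rule iso_in_hom)
  have "g' = g' \<cdot> (f \<cdot> g)" using comp_idn_right[OF g'] assms(3) by simp
  also have "\<dots> = (g' \<cdot> f) \<cdot> g" using comp_assoc[OF g' f assms(2)] by simp
  finally show "g' = g" using \<open>g' \<cdot> f = idn C B\<close> comp_idn_left[OF assms(2)] by simp
qed

lemma inv_in:
  assumes "iso_in C A B f"
  shows "inv_in C A B f \<in> Hom C B A" and "f \<cdot> inv_in C A B f = idn C A"
    and "inv_in C A B f \<cdot> f = idn C B"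
proof -
  obtain g where "g \<in> Hom C B A" "f \<cdot> g = idn C A" "g \<cdot> f = idn C B"
    using assms unfolding iso_in_def by blast
  with inv_in_eqI[OF assms this] show "inv_in C A B f \<in> Hom C B A" "f \<cdot> inv_in C A B f = idn C A"
    "inv_in C A B f \<cdot> f = idn C B" by simp_all
qed

end

locale comonoidal_monad = smc_category C for C :: "('o,'m) smcat" +
  fixes To :: "'o \<Rightarrow> 'o" and Tm :: "'m \<Rightarrow> 'm" and mu eta :: "'o \<Rightarrow> 'm"
    and n :: "'o \<Rightarrow> 'o \<Rightarrow> 'm" and nK :: 'm
  assumes sc_monad: "sc_monad C To Tm mu eta n nK"
begin

lemma To_obj [hom]: "A \<in> Obj C \<Longrightarrow> To A \<in> Obj C"
  and Tm_hom [hom]: "f \<in> Hom C A B \<Longrightarrow> Tm f \<in> Hom C (To A) (To B)"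
  and Tm_idn: "A \<in> Obj C \<Longrightarrow> Tm (idn C A) = idn C (To A)"
  and Tm_comp: "f \<in> Hom C A B \<Longrightarrow> g \<in> Hom C B D \<Longrightarrow> Tm (f \<cdot> g) = Tm f \<cdot> Tm g"
  and mu_hom [hom]: "A \<in> Obj C \<Longrightarrow> mu A \<in> Hom C (To (To A)) (To A)"
  and eta_hom [hom]: "A \<in> Obj C \<Longrightarrow> eta A \<in> Hom C A (To A)"
  and mu_assoc: "A \<in> Obj C \<Longrightarrow> Tm (mu A) \<cdot> mu A = mu (To A) \<cdot> mu A"
  and eta_mu: "A \<in> Obj C \<Longrightarrow> eta (To A) \<cdot> mu A = idn C (To A)"
  and Tm_eta_mu: "A \<in> Obj C \<Longrightarrow> Tm (eta A) \<cdot> mu A = idn C (To A)"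
  and n_hom [hom]: "A \<in> Obj C \<Longrightarrow> B \<in> Obj C \<Longrightarrow> n A B \<in> Hom C (To (tns C A B)) (tns C (To A) (To B))"
  and nK_hom [hom]: "nK \<in> Hom C (To (unt C)) (unt C)"
  and n_natural: "f \<in> Hom C A A' \<Longrightarrow> g \<in> Hom C B B' \<Longrightarrow> Tm (f \<otimes> g) \<cdot> n A' B' = n A B \<cdot> (Tm f \<otimes> Tm g)"
  and n_asc: "A \<in> Obj C \<Longrightarrow> B \<in> Obj C \<Longrightarrow> D \<in> Obj C \<Longrightarrow>
     Tm (asc C A B D) \<cdot> (n A (tns C B D) \<cdot> (idn C (To A) \<otimes> n B D)) =
     n (tns C A B) D \<cdot> ((n A B \<otimes> idn C (To D)) \<cdot> asc C (To A) (To B) (To D))"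
  and n_lun: "A \<in> Obj C \<Longrightarrow> Tm (lun C A) = n (unt C) A \<cdot> ((nK \<otimes> idn C (To A)) \<cdot> lun C (To A))"
  and n_run: "A \<in> Obj C \<Longrightarrow> Tm (run C A) = n A (unt C) \<cdot> ((idn C (To A) \<otimes> nK) \<cdot> run C (To A))"
  and n_brd: "A \<in> Obj C \<Longrightarrow> B \<in> Obj C \<Longrightarrow> Tm (brd C A B) \<cdot> n B A = n A B \<cdot> brd C (To A) (To B)"
  and n_mu: "A \<in> Obj C \<Longrightarrow> B \<in> Obj C \<Longrightarrow>
     mu (tns C A B) \<cdot> n A B = Tm (n A B) \<cdot> (n (To A) (To B) \<cdot> (mu A \<otimes> mu B))"
  and n_eta: "A \<in> Obj C \<Longrightarrow> B \<in> Obj C \<Longrightarrow> eta (tns C A B) \<cdot> n A B = eta A \<otimes> eta B"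
  and nK_mu: "mu (unt C) \<cdot> nK = Tm nK \<cdot> nK"
  and nK_eta: "eta (unt C) \<cdot> nK = idn C (unt C)"
  using sc_monad unfolding sc_monad_def functor_on_def nat_trans_def by simp_all

abbreviation EM :: "('o \<times> 'm, 'm) smcat" where "EM \<equiv> em C To Tm mu eta n nK"

lemma em_Obj_iff: "(A, v) \<in> Obj EM \<longleftrightarrow>
    A \<in> Obj C \<and> v \<in> Hom C (To A) A \<and> eta A \<cdot> v = idn C A \<and> mu A \<cdot> v = Tm v \<cdot> v"
  by (simp add: em_def em_obj_def)

lemma em_Hom_iff: "f \<in> Hom EM (A, u) (B, v) \<longleftrightarrow>
    f \<in> Hom C A B \<and> (A, u) \<in> Obj EM \<and> (B, v) \<in> Obj EM \<and> u \<cdot> f = Tm f \<cdot> v"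
  by (simp add: em_def)

lemma em_tns: "tns EM (A, u) (B, v) = (tns C A B, n A B \<cdot> (u \<otimes> v))"
  and em_unt: "unt EM = (unt C, nK)"
  by (simp_all add: em_def)

lemma em_simps:
  "cmp EM = cmp C" "tnsm EM = tnsm C" "pls EM = pls C"
  "idn EM P = idn C (fst P)" "fst (tns EM P Q) = tns C (fst P) (fst Q)" "fst (unt EM) = unt C"
  "asc EM P Q R = asc C (fst P) (fst Q) (fst R)"
  "lun EM P = lun C (fst P)" "run EM P = run C (fst P)"
  "brd EM P Q = brd C (fst P) (fst Q)" "zro EM P Q = zro C (fst P) (fst Q)"
  by (simp_all add: em_def split_beta)

lemma tns_algebra:
  assumes "P \<in> Obj EM" and "Q \<in> Obj EM"
  shows "tns EM P Q \<in> Obj EM"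
proof -
  obtain A u B v where PQ: "P = (A, u)" "Q = (B, v)" by fastforce
  from assms have A [hom]: "A \<in> Obj C" and u [hom]: "u \<in> Hom C (To A) A"
    and B [hom]: "B \<in> Obj C" and v [hom]: "v \<in> Hom C (To B) B"
    and u_unit: "eta A \<cdot> u = idn C A" and u_mult: "mu A \<cdot> u = Tm u \<cdot> u"
    and v_unit: "eta B \<cdot> v = idn C B" and v_mult: "mu B \<cdot> v = Tm v \<cdot> v"
    by (simp_all add: PQ em_Obj_iff)
  have "eta (tns C A B) \<cdot> (n A B \<cdot> (u \<otimes> v)) = (eta (tns C A B) \<cdot> n A B) \<cdot> (u \<otimes> v)"
    by (subst comp_assoc, (rule hom)+ | rule refl)+
  also have "\<dots> = (eta A \<cdot> u) \<otimes> (eta B \<cdot> v)"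
    by (simp only: n_eta A B) (subst tnsm_comp, (rule hom)+ | rule refl)+
  finally have unit: "eta (tns C A B) \<cdot> (n A B \<cdot> (u \<otimes> v)) = idn C (tns C A B)"
    by (simp add: u_unit v_unit tnsm_idn A B)
  have "mu (tns C A B) \<cdot> (n A B \<cdot> (u \<otimes> v)) = (mu (tns C A B) \<cdot> n A B) \<cdot> (u \<otimes> v)"
    by (subst comp_assoc, (rule hom)+ | rule refl)+
  also have "\<dots> = Tm (n A B) \<cdot> (n (To A) (To B) \<cdot> ((mu A \<cdot> u) \<otimes> (mu B \<cdot> v)))"
    by (simp only: n_mu A B) (subst comp_assoc tnsm_comp, (rule hom)+ | rule refl)+
  also have "\<dots> = Tm (n A B) \<cdot> ((n (To A) (To B) \<cdot> (Tm u \<otimes> Tm v)) \<cdot> (u \<otimes> v))"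
    by (simp only: u_mult v_mult) (subst comp_assoc tnsm_comp, (rule hom)+ | rule refl)+
  also have "\<dots> = Tm (n A B \<cdot> (u \<otimes> v)) \<cdot> (n A B \<cdot> (u \<otimes> v))"
    by (simp only: n_natural[OF u v, symmetric])
      (subst comp_assoc Tm_comp, (rule hom)+ | rule refl)+
  finally have mult: "mu (tns C A B) \<cdot> (n A B \<cdot> (u \<otimes> v)) =
      Tm (n A B \<cdot> (u \<otimes> v)) \<cdot> (n A B \<cdot> (u \<otimes> v))" .
  show ?thesis
    unfolding PQ em_tns em_Obj_iff using unit mult by (blast intro: hom)
qed

lemma unt_algebra: "unt EM \<in> Obj EM"
  using nK_eta nK_mu by (simp add: em_unt em_Obj_iff hom)

lemma free_algebra: "A \<in> Obj C \<Longrightarrow> (To A, mu A) \<in> Obj EM"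
  using eta_mu mu_assoc by (simp add: em_Obj_iff hom)

lemma em_Hom_D: "f \<in> Hom EM P Q \<Longrightarrow> f \<in> Hom C (fst P) (fst Q)"
  by (cases P, cases Q) (simp add: em_Hom_iff)

lemma em_Obj_D: "(A, u) \<in> Obj EM \<Longrightarrow> A \<in> Obj C"
  by (simp add: em_Obj_iff)

lemma em_HomI:
  assumes "P \<in> Obj EM" "Q \<in> Obj EM" "f \<in> Hom C (fst P) (fst Q)" "snd P \<cdot> f = Tm f \<cdot> snd Q"
  shows "f \<in> Hom EM P Q"
  using assms by (cases P, cases Q) (simp add: em_Hom_iff)

lemma idn_algebra_hom:
  assumes "(A, u) \<in> Obj EM" shows "idn C A \<in> Hom EM (A, u) (A, u)"
proof -
  from assms have A: "A \<in> Obj C" and u: "u \<in> Hom C (To A) A" by (simp_all add: em_Obj_iff)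
  then have "u \<cdot> idn C A = Tm (idn C A) \<cdot> u"
    by (simp add: Tm_idn comp_idn_left comp_idn_right)
  with assms A show ?thesis by (intro em_HomI) (simp_all add: hom)
qed

lemma comp_algebra_hom:
  assumes f: "f \<in> Hom EM (A, u) (B, v)" and g: "g \<in> Hom EM (B, v) (D, w)"
  shows "f \<cdot> g \<in> Hom EM (A, u) (D, w)"
proof -
  from f g have [hom]: "f \<in> Hom C A B" "g \<in> Hom C B D" "u \<in> Hom C (To A) A"
    "v \<in> Hom C (To B) B" "w \<in> Hom C (To D) D"
    and f_alg: "u \<cdot> f = Tm f \<cdot> v" and g_alg: "v \<cdot> g = Tm g \<cdot> w"
    and objs: "(A, u) \<in> Obj EM" "(D, w) \<in> Obj EM"
    by (simp_all add: em_Hom_iff em_Obj_iff)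
  have "u \<cdot> (f \<cdot> g) = (Tm f \<cdot> v) \<cdot> g"
    by (simp only: f_alg[symmetric]) (subst comp_assoc, (rule hom)+ | rule refl)+
  also have "\<dots> = Tm (f \<cdot> g) \<cdot> w"
    by (subst comp_assoc, (rule hom)+, simp only: g_alg)
      (subst comp_assoc Tm_comp, (rule hom)+ | rule refl)+
  finally show ?thesis
    by (intro em_HomI objs) (simp_all add: comp_hom[of f A B g D] hom)
qed

lemma category_em: "category EM"
  unfolding category_def
proof (intro conjI allI impI ballI)
  show "P \<in> Obj EM" "Q \<in> Obj EM" if "Hom EM P Q \<noteq> {}" for P Q
    using that by (cases P, cases Q, auto simp: em_Hom_iff)+
  show "idn EM P \<in> Hom EM P P" if "P \<in> Obj EM" for P
    using that idn_algebra_hom by (cases P) (simp add: em_simps)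
  show "cmp EM f g \<in> Hom EM P R" if "f \<in> Hom EM P Q" "g \<in> Hom EM Q R" for P Q R f g
    using that comp_algebra_hom by (cases P, cases Q, cases R) (simp add: em_simps)
  show "cmp EM (idn EM P) f = f" "cmp EM f (idn EM Q) = f" if "f \<in> Hom EM P Q" for P Q f
    using comp_idn_left[OF em_Hom_D] comp_idn_right[OF em_Hom_D] that by (simp_all add: em_simps)
  show "cmp EM (cmp EM f g) h = cmp EM f (cmp EM g h)"
    if "f \<in> Hom EM P Q" "g \<in> Hom EM Q R" "h \<in> Hom EM R S" for P Q R S f g h
    using comp_assoc[OF em_Hom_D em_Hom_D em_Hom_D] that by (simp add: em_simps)
qed

lemma tnsm_algebra_hom:
  assumes f: "f \<in> Hom EM (A, u) (A', u')" and g: "g \<in> Hom EM (B, v) (B', v')"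
  shows "f \<otimes> g \<in> Hom EM (tns EM (A, u) (B, v)) (tns EM (A', u') (B', v'))"
proof -
  from f g have [hom]: "f \<in> Hom C A A'" "g \<in> Hom C B B'" "A \<in> Obj C" "B \<in> Obj C"
    "A' \<in> Obj C" "B' \<in> Obj C"
    "u \<in> Hom C (To A) A" "v \<in> Hom C (To B) B" "u' \<in> Hom C (To A') A'" "v' \<in> Hom C (To B') B'"
    and f_alg: "u \<cdot> f = Tm f \<cdot> u'" and g_alg: "v \<cdot> g = Tm g \<cdot> v'"
    by (simp_all add: em_Hom_iff em_Obj_iff)
  have "(n A B \<cdot> (u \<otimes> v)) \<cdot> (f \<otimes> g) = n A B \<cdot> ((u \<cdot> f) \<otimes> (v \<cdot> g))"
    by (subst comp_assoc tnsm_comp, (rule hom)+ | rule refl)+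
  also have "\<dots> = (n A B \<cdot> (Tm f \<otimes> Tm g)) \<cdot> (u' \<otimes> v')"
    by (simp only: f_alg g_alg) (subst comp_assoc tnsm_comp, (rule hom)+ | rule refl)+
  also have "\<dots> = Tm (f \<otimes> g) \<cdot> (n A' B' \<cdot> (u' \<otimes> v'))"
    by (simp only: n_natural[of f A A' g B B', symmetric] hom)
      (subst comp_assoc, (rule hom)+ | rule refl)+
  finally show ?thesis
    using f g tns_algebra[of "(A, u)" "(B, v)"] tns_algebra[of "(A', u')" "(B', v')"]
    by (simp add: em_Hom_iff em_tns hom)
qed

lemma asc_algebra_hom:
  assumes "(A, u) \<in> Obj EM" and "(B, v) \<in> Obj EM" and "(D, w) \<in> Obj EM"
  shows "asc C A B D \<in> Hom EM (tns EM (tns EM (A, u) (B, v)) (D, w))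
      (tns EM (A, u) (tns EM (B, v) (D, w)))"
proof -
  from assms have [hom]: "A \<in> Obj C" "B \<in> Obj C" "D \<in> Obj C"
    and u [hom]: "u \<in> Hom C (To A) A" and [hom]: "v \<in> Hom C (To B) B"
    and w [hom]: "w \<in> Hom C (To D) D"
    by (simp_all add: em_Obj_iff)
  have "(n (tns C A B) D \<cdot> ((n A B \<cdot> (u \<otimes> v)) \<otimes> w)) \<cdot> asc C A B D
      = n (tns C A B) D \<cdot> ((n A B \<otimes> idn C (To D)) \<cdot> (((u \<otimes> v) \<otimes> w) \<cdot> asc C A B D))"
    by (subst comp_idn_left[OF w, symmetric]) (subst comp_assoc tnsm_comp, (rule hom)+ | rule refl)+
  also have "\<dots>
      = (n (tns C A B) D \<cdot> ((n A B \<otimes> idn C (To D)) \<cdot> asc C (To A) (To B) (To D))) \<cdot> (u \<otimes> (v \<otimes> w))"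
    by (subst asc_natural[symmetric], (rule hom)+ | subst comp_assoc, (rule hom)+ | rule refl)+
  also have "\<dots> = Tm (asc C A B D) \<cdot> (n A (tns C B D) \<cdot> (u \<otimes> (n B D \<cdot> (v \<otimes> w))))"
    by (simp only: n_asc[symmetric] hom, subst (2) comp_idn_left[OF u, symmetric])
      (subst comp_assoc tnsm_comp, (rule hom)+ | rule refl)+
  finally show ?thesis
    by (intro em_HomI tns_algebra assms) (simp_all add: em_tns hom)
qed

lemma lun_algebra_hom:
  assumes "(A, u) \<in> Obj EM"
  shows "lun C A \<in> Hom EM (tns EM (unt EM) (A, u)) (A, u)"
proof -
  from assms have [hom]: "A \<in> Obj C" and u [hom]: "u \<in> Hom C (To A) A"
    by (simp_all add: em_Obj_iff)
  have "(n (unt C) A \<cdot> (nK \<otimes> u)) \<cdot> lun C A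
      = n (unt C) A \<cdot> ((nK \<otimes> idn C (To A)) \<cdot> ((idn C (unt C) \<otimes> u) \<cdot> lun C A))"
    by (subst tnsm_as_comp(1)[OF nK_hom u]) (subst comp_assoc, (rule hom)+ | rule refl)+
  also have "\<dots> = Tm (lun C A) \<cdot> u"
    by (simp only: lun_natural[OF u, symmetric] n_lun hom)
      (subst comp_assoc, (rule hom)+ | rule refl)+
  finally show ?thesis
    by (intro em_HomI tns_algebra unt_algebra assms) (simp_all add: em_tns em_unt hom)
qed

lemma run_algebra_hom:
  assumes "(A, u) \<in> Obj EM"
  shows "run C A \<in> Hom EM (tns EM (A, u) (unt EM)) (A, u)"
proof -
  from assms have [hom]: "A \<in> Obj C" and u [hom]: "u \<in> Hom C (To A) A"
    by (simp_all add: em_Obj_iff)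
  have "(n A (unt C) \<cdot> (u \<otimes> nK)) \<cdot> run C A
      = n A (unt C) \<cdot> ((idn C (To A) \<otimes> nK) \<cdot> ((u \<otimes> idn C (unt C)) \<cdot> run C A))"
    by (subst tnsm_as_comp(2)[OF u nK_hom]) (subst comp_assoc, (rule hom)+ | rule refl)+
  also have "\<dots> = Tm (run C A) \<cdot> u"
    by (simp only: run_natural[OF u, symmetric] n_run hom)
      (subst comp_assoc, (rule hom)+ | rule refl)+
  finally show ?thesis
    by (intro em_HomI tns_algebra unt_algebra assms) (simp_all add: em_tns em_unt hom)
qed

lemma brd_algebra_hom:
  assumes "(A, u) \<in> Obj EM" and "(B, v) \<in> Obj EM"
  shows "brd C A B \<in> Hom EM (tns EM (A, u) (B, v)) (tns EM (B, v) (A, u))"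
proof -
  from assms have [hom]: "A \<in> Obj C" "B \<in> Obj C" and u [hom]: "u \<in> Hom C (To A) A"
    and v [hom]: "v \<in> Hom C (To B) B"
    by (simp_all add: em_Obj_iff)
  have "(n A B \<cdot> (u \<otimes> v)) \<cdot> brd C A B = (n A B \<cdot> brd C (To A) (To B)) \<cdot> (v \<otimes> u)"
    by (subst comp_assoc, (rule hom)+ | subst brd_natural[OF u v] | rule refl)+
  also have "\<dots> = Tm (brd C A B) \<cdot> (n B A \<cdot> (v \<otimes> u))"
    by (simp only: n_brd[symmetric] hom) (subst comp_assoc, (rule hom)+ | rule refl)+
  finally show ?thesis
    by (intro em_HomI tns_algebra assms) (simp_all add: em_tns hom)
qed

lemma iso_algebra_hom:
  assumes iso: "iso_in C (fst P) (fst Q) f" and f: "f \<in> Hom EM P Q"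
  shows "iso_in EM P Q f" and "inv_in EM P Q f = inv_in C (fst P) (fst Q) f"
proof -
  obtain A u B v where PQ: "P = (A, u)" "Q = (B, v)" by fastforce
  define g where "g = inv_in C A B f"
  from f have [hom]: "f \<in> Hom C A B" "u \<in> Hom C (To A) A" and v [hom]: "v \<in> Hom C (To B) B"
    and B: "B \<in> Obj C" and f_alg: "u \<cdot> f = Tm f \<cdot> v" and objs: "P \<in> Obj EM" "Q \<in> Obj EM"
    by (simp_all add: PQ em_Hom_iff em_Obj_iff)
  have g [hom]: "g \<in> Hom C B A" and fg: "f \<cdot> g = idn C A" and gf: "g \<cdot> f = idn C B"
    using inv_in[OF iso] by (simp_all add: PQ g_def)
  have "v \<cdot> g = Tm (g \<cdot> f) \<cdot> (v \<cdot> g)"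
    by (simp add: gf Tm_idn[OF B] comp_idn_left[OF comp_hom[OF v g]])
  also have "\<dots> = Tm g \<cdot> ((u \<cdot> f) \<cdot> g)"
    by (simp only: f_alg) (subst comp_assoc Tm_comp, (rule hom)+ | rule refl)+
  also have "\<dots> = Tm g \<cdot> u"
    by (subst comp_assoc, (rule hom)+) (simp add: fg comp_idn_right[of u "To A" A] hom)
  finally have g_em: "g \<in> Hom EM Q P"
    using objs by (intro em_HomI) (simp_all add: PQ hom)
  show "iso_in EM P Q f"
    unfolding iso_in_def using f g_em fg gf by (auto simp: PQ em_simps)
  show "inv_in EM P Q f = inv_in C (fst P) (fst Q) f"
    unfolding inv_in_def[of EM]
  proof (rule the_equality)
    show "inv_in C (fst P) (fst Q) f \<in> Hom EM Q P \<and> cmp EM f (inv_in C (fst P) (fst Q) f) = idn EM P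
        \<and> cmp EM (inv_in C (fst P) (fst Q) f) f = idn EM Q"
      using g_em fg gf by (simp add: PQ g_def em_simps)
  next
    fix g' assume "g' \<in> Hom EM Q P \<and> cmp EM f g' = idn EM P \<and> cmp EM g' f = idn EM Q"
    then show "g' = inv_in C (fst P) (fst Q) f"
      using inv_in_eqI[OF iso] by (auto simp: PQ em_simps em_Hom_iff)
  qed
qed

lemma smc_em: "smc EM"
  unfolding smc_def
  apply (intro conjI)
  subgoal by (rule category_em)
  subgoal by (rule unt_algebra)
  subgoal by (simp add: tns_algebra)
  subgoal by (simp add: split_paired_All tnsm_algebra_hom em_simps)
  subgoal by (auto simp: split_paired_all em_simps intro!: tnsm_idn dest: em_Obj_D)
  subgoal using tnsm_comp[OF em_Hom_D em_Hom_D em_Hom_D em_Hom_D] by (simp add: em_simps)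
  subgoal by (auto simp: split_paired_all em_simps intro!: iso_algebra_hom asc_iso asc_algebra_hom
    dest: em_Obj_D)
  subgoal by (auto simp: split_paired_all em_simps intro!: iso_algebra_hom lun_iso lun_algebra_hom
    dest: em_Obj_D)
  subgoal by (auto simp: split_paired_all em_simps intro!: iso_algebra_hom run_iso run_algebra_hom
    dest: em_Obj_D)
  subgoal by (simp add: Ball_def split_paired_All em_simps brd_algebra_hom)
  subgoal using asc_natural[OF em_Hom_D em_Hom_D em_Hom_D] by (simp add: em_simps)
  subgoal using lun_natural[OF em_Hom_D] by (simp add: em_simps)
  subgoal using run_natural[OF em_Hom_D] by (simp add: em_simps)
  subgoal using brd_natural[OF em_Hom_D em_Hom_D] by (simp add: em_simps)
  subgoal by (auto simp: split_paired_all em_simps intro!: pentagon dest: em_Obj_D)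
  subgoal by (auto simp: split_paired_all em_simps intro!: triangle dest: em_Obj_D)
  subgoal by (auto simp: split_paired_all em_simps intro!: hexagon dest: em_Obj_D)
  subgoal by (auto simp: split_paired_all em_simps intro!: brd_brd dest: em_Obj_D)
  done

lemma asc_inv_em:
  assumes "(A, u) \<in> Obj EM" and "(B, v) \<in> Obj EM" and "(D, w) \<in> Obj EM"
  shows "asc_inv EM (A, u) (B, v) (D, w) = asc_inv C A B D"
  using iso_algebra_hom(2)[OF _ asc_algebra_hom[OF assms]] asc_iso assms
  by (simp add: asc_inv_def em_simps em_tns em_Obj_D)

end

locale additive_comonoidal_monad = comonoidal_monad +
  assumes additive: "additive C" and Tm_additive: "additive_functor C To Tm"
begin

lemma zro_hom: "A \<in> Obj C \<Longrightarrow> B \<in> Obj C \<Longrightarrow> zro C A B \<in> Hom C A B"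
  and pls_hom: "f \<in> Hom C A B \<Longrightarrow> g \<in> Hom C A B \<Longrightarrow> pls C f g \<in> Hom C A B"
  and pls_assoc: "f \<in> Hom C A B \<Longrightarrow> g \<in> Hom C A B \<Longrightarrow> h \<in> Hom C A B \<Longrightarrow>
    pls C (pls C f g) h = pls C f (pls C g h)"
  and pls_commute: "f \<in> Hom C A B \<Longrightarrow> g \<in> Hom C A B \<Longrightarrow> pls C f g = pls C g f"
  and pls_zro: "f \<in> Hom C A B \<Longrightarrow> pls C f (zro C A B) = f"
  and comp_pls: "h \<in> Hom C D A \<Longrightarrow> f \<in> Hom C A B \<Longrightarrow> g \<in> Hom C A B \<Longrightarrow>
    h \<cdot> pls C f g = pls C (h \<cdot> f) (h \<cdot> g)"
  and comp_zro: "h \<in> Hom C D A \<Longrightarrow> B \<in> Obj C \<Longrightarrow> h \<cdot> zro C A B = zro C D B"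
  and pls_comp: "f \<in> Hom C A B \<Longrightarrow> g \<in> Hom C A B \<Longrightarrow> h \<in> Hom C B E \<Longrightarrow>
    pls C f g \<cdot> h = pls C (f \<cdot> h) (g \<cdot> h)"
  and zro_comp: "h \<in> Hom C B E \<Longrightarrow> A \<in> Obj C \<Longrightarrow> zro C A B \<cdot> h = zro C A E"
  and tnsm_pls: "h \<in> Hom C D E \<Longrightarrow> f \<in> Hom C A B \<Longrightarrow> g \<in> Hom C A B \<Longrightarrow>
    h \<otimes> pls C f g = pls C (h \<otimes> f) (h \<otimes> g) \<and> pls C f g \<otimes> h = pls C (f \<otimes> h) (g \<otimes> h)"
  and tnsm_zro: "h \<in> Hom C D E \<Longrightarrow> A \<in> Obj C \<Longrightarrow> B \<in> Obj C \<Longrightarrow>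
    h \<otimes> zro C A B = zro C (tns C D A) (tns C E B) \<and> zro C A B \<otimes> h = zro C (tns C A D) (tns C B E)"
  and Tm_pls: "f \<in> Hom C A B \<Longrightarrow> g \<in> Hom C A B \<Longrightarrow> Tm (pls C f g) = pls C (Tm f) (Tm g)"
  and Tm_zro: "A \<in> Obj C \<Longrightarrow> B \<in> Obj C \<Longrightarrow> Tm (zro C A B) = zro C (To A) (To B)"
  using additive Tm_additive unfolding additive_def additive_functor_def by simp_all

lemma zro_algebra_hom:
  assumes "(A, u) \<in> Obj EM" and "(B, v) \<in> Obj EM"
  shows "zro C A B \<in> Hom EM (A, u) (B, v)"
proof -
  from assms have A: "A \<in> Obj C" and B: "B \<in> Obj C" and u: "u \<in> Hom C (To A) A"
    and v: "v \<in> Hom C (To B) B" by (simp_all add: em_Obj_iff)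
  have "u \<cdot> zro C A B = Tm (zro C A B) \<cdot> v"
    using comp_zro[OF u B] zro_comp[OF v To_obj[OF A]] by (simp add: Tm_zro A B)
  with assms show ?thesis by (simp add: em_Hom_iff zro_hom A B)
qed

lemma pls_algebra_hom:
  assumes "f \<in> Hom EM (A, u) (B, v)" and "g \<in> Hom EM (A, u) (B, v)"
  shows "pls C f g \<in> Hom EM (A, u) (B, v)"
proof -
  from assms have f: "f \<in> Hom C A B" and g: "g \<in> Hom C A B" and u: "u \<in> Hom C (To A) A"
    and v: "v \<in> Hom C (To B) B" and "u \<cdot> f = Tm f \<cdot> v" "u \<cdot> g = Tm g \<cdot> v"
    by (simp_all add: em_Hom_iff em_Obj_iff)
  then have "u \<cdot> pls C f g = Tm (pls C f g) \<cdot> v"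
    using comp_pls[OF u f g] pls_comp[OF Tm_hom[OF f] Tm_hom[OF g] v] by (simp add: Tm_pls)
  with assms show ?thesis by (simp add: em_Hom_iff pls_hom f g)
qed

lemma additive_em: "additive EM"
  unfolding additive_def
  apply (intro conjI)
  subgoal by (auto simp: split_paired_all em_simps zro_algebra_hom)
  subgoal by (auto simp: split_paired_all em_simps pls_algebra_hom)
  subgoal using pls_assoc[OF em_Hom_D em_Hom_D em_Hom_D] by (simp add: em_simps)
  subgoal using pls_commute[OF em_Hom_D em_Hom_D] by (simp add: em_simps)
  subgoal using pls_zro[OF em_Hom_D] by (simp add: em_simps)
  subgoal using comp_pls[OF em_Hom_D em_Hom_D em_Hom_D] by (simp add: em_simps)
  subgoal by (auto simp: split_paired_all em_simps intro!: comp_zro dest: em_Hom_D em_Obj_D)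
  subgoal using pls_comp[OF em_Hom_D em_Hom_D em_Hom_D] by (simp add: em_simps)
  subgoal by (auto simp: split_paired_all em_simps intro!: zro_comp dest: em_Hom_D em_Obj_D)
  subgoal using tnsm_pls[OF em_Hom_D em_Hom_D em_Hom_D] by (simp add: em_simps)
  subgoal by (auto simp: split_paired_all em_simps dest: em_Hom_D em_Obj_D
      intro!: tnsm_zro[THEN conjunct1] tnsm_zro[THEN conjunct2])
  done

end

locale lifted_coalgebra_modality = comonoidal_monad C To Tm mu eta n nK
  for C :: "('o,'m) smcat" and To Tm mu eta n nK +
  fixes Bo :: "'o \<Rightarrow> 'o" and Bm :: "'m \<Rightarrow> 'm" and dl ep De ee lam :: "'o \<Rightarrow> 'm"
  assumes coalgebra_modality: "coalgebra_modality C Bo Bm dl ep De ee"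
    and mixed_law: "coalg_mdl C To Tm mu eta n nK Bo Bm dl ep De ee lam"
begin

lemma Bo_obj [hom]: "A \<in> Obj C \<Longrightarrow> Bo A \<in> Obj C"
  and Bm_hom [hom]: "f \<in> Hom C A B \<Longrightarrow> Bm f \<in> Hom C (Bo A) (Bo B)"
  and Bm_idn: "A \<in> Obj C \<Longrightarrow> Bm (idn C A) = idn C (Bo A)"
  and Bm_comp: "f \<in> Hom C A B \<Longrightarrow> g \<in> Hom C B D \<Longrightarrow> Bm (f \<cdot> g) = Bm f \<cdot> Bm g"
  and dl_hom [hom]: "A \<in> Obj C \<Longrightarrow> dl A \<in> Hom C (Bo A) (Bo (Bo A))"
  and dl_natural: "f \<in> Hom C A B \<Longrightarrow> dl A \<cdot> Bm (Bm f) = Bm f \<cdot> dl B"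
  and ep_hom [hom]: "A \<in> Obj C \<Longrightarrow> ep A \<in> Hom C (Bo A) A"
  and ep_natural: "f \<in> Hom C A B \<Longrightarrow> ep A \<cdot> f = Bm f \<cdot> ep B"
  and De_hom [hom]: "A \<in> Obj C \<Longrightarrow> De A \<in> Hom C (Bo A) (tns C (Bo A) (Bo A))"
  and De_natural: "f \<in> Hom C A B \<Longrightarrow> De A \<cdot> (Bm f \<otimes> Bm f) = Bm f \<cdot> De B"
  and ee_hom [hom]: "A \<in> Obj C \<Longrightarrow> ee A \<in> Hom C (Bo A) (unt C)"
  and ee_natural: "f \<in> Hom C A B \<Longrightarrow> ee A \<cdot> idn C (unt C) = Bm f \<cdot> ee B"
  using coalgebra_modality unfolding coalgebra_modality_def functor_on_def nat_trans_def by simp_all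

lemma lam_hom [hom]: "A \<in> Obj C \<Longrightarrow> lam A \<in> Hom C (To (Bo A)) (Bo (To A))"
  and lam_natural: "f \<in> Hom C A B \<Longrightarrow> lam A \<cdot> Bm (Tm f) = Tm (Bm f) \<cdot> lam B"
  and lam_mu: "A \<in> Obj C \<Longrightarrow> mu (Bo A) \<cdot> lam A = Tm (lam A) \<cdot> (lam (To A) \<cdot> Bm (mu A))"
  and lam_eta: "A \<in> Obj C \<Longrightarrow> eta (Bo A) \<cdot> lam A = Bm (eta A)"
  and lam_dl: "A \<in> Obj C \<Longrightarrow> Tm (dl A) \<cdot> (lam (Bo A) \<cdot> Bm (lam A)) = lam A \<cdot> dl (To A)"
  and lam_ep: "A \<in> Obj C \<Longrightarrow> lam A \<cdot> ep (To A) = Tm (ep A)"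
  and lam_De: "A \<in> Obj C \<Longrightarrow> Tm (De A) \<cdot> (n (Bo A) (Bo A) \<cdot> (lam A \<otimes> lam A)) = lam A \<cdot> De (To A)"
  and lam_ee: "A \<in> Obj C \<Longrightarrow> Tm (ee A) \<cdot> nK = lam A \<cdot> ee (To A)"
  using mixed_law unfolding coalg_mdl_def nat_trans_def by simp_all

abbreviation lift :: "'o \<times> 'm \<Rightarrow> 'o \<times> 'm" where "lift \<equiv> lift_bang C Bo Bm lam"

lemma lift_pair: "lift (A, v) = (Bo A, lam A \<cdot> Bm v)"
  by (simp add: lift_bang_def)

lemma lift_algebra:
  assumes "P \<in> Obj EM" shows "lift P \<in> Obj EM"
proof -
  obtain A v where P: "P = (A, v)" by fastforce
  from assms have A [hom]: "A \<in> Obj C" and v [hom]: "v \<in> Hom C (To A) A"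
    and v_unit: "eta A \<cdot> v = idn C A" and v_mult: "mu A \<cdot> v = Tm v \<cdot> v"
    by (simp_all add: P em_Obj_iff)
  have "eta (Bo A) \<cdot> (lam A \<cdot> Bm v) = Bm (eta A \<cdot> v)"
    by (subst comp_assoc[symmetric] Bm_comp, (rule hom)+ | simp only: lam_eta A)+
  then have unit: "eta (Bo A) \<cdot> (lam A \<cdot> Bm v) = idn C (Bo A)"
    by (simp add: v_unit Bm_idn A)
  have "mu (Bo A) \<cdot> (lam A \<cdot> Bm v) = Tm (lam A) \<cdot> (lam (To A) \<cdot> Bm (mu A \<cdot> v))"
    by (subst comp_assoc[symmetric], (rule hom)+, simp only: lam_mu A)
      (subst Bm_comp comp_assoc, (rule hom)+ | rule refl)+
  also have "\<dots> = Tm (lam A) \<cdot> ((lam (To A) \<cdot> Bm (Tm v)) \<cdot> Bm v)"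
    by (simp only: v_mult) (subst Bm_comp comp_assoc, (rule hom)+ | rule refl)+
  also have "\<dots> = Tm (lam A \<cdot> Bm v) \<cdot> (lam A \<cdot> Bm v)"
    by (simp only: lam_natural[OF v]) (subst Tm_comp comp_assoc, (rule hom)+ | rule refl)+
  finally have mult: "mu (Bo A) \<cdot> (lam A \<cdot> Bm v) = Tm (lam A \<cdot> Bm v) \<cdot> (lam A \<cdot> Bm v)" .
  show ?thesis
    unfolding P lift_pair em_Obj_iff using unit mult by (blast intro: hom)
qed

lemma lift_pair_algebra: "(A, v) \<in> Obj EM \<Longrightarrow> (Bo A, lam A \<cdot> Bm v) \<in> Obj EM"
  using lift_algebra[of "(A, v)"] by (simp add: lift_pair)

lemma coalgebra_laws: "A \<in> Obj C \<Longrightarrow>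
     dl A \<cdot> dl (Bo A) = dl A \<cdot> Bm (dl A) \<and>
     dl A \<cdot> ep (Bo A) = idn C (Bo A) \<and>
     dl A \<cdot> Bm (ep A) = idn C (Bo A) \<and>
     De A \<cdot> ((De A \<otimes> idn C (Bo A)) \<cdot> asc C (Bo A) (Bo A) (Bo A)) = De A \<cdot> (idn C (Bo A) \<otimes> De A) \<and>
     De A \<cdot> ((ee A \<otimes> idn C (Bo A)) \<cdot> lun C (Bo A)) = idn C (Bo A) \<and>
     De A \<cdot> ((idn C (Bo A) \<otimes> ee A) \<cdot> run C (Bo A)) = idn C (Bo A) \<and>
     De A \<cdot> brd C (Bo A) (Bo A) = De A \<and>
     dl A \<cdot> De (Bo A) = De A \<cdot> (dl A \<otimes> dl A) \<and>
     dl A \<cdot> ee (Bo A) = ee A"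
  using coalgebra_modality unfolding coalgebra_modality_def by simp

lemma Bm_algebra_hom:
  assumes f: "f \<in> Hom EM (A, u) (B, v)"
  shows "Bm f \<in> Hom EM (lift (A, u)) (lift (B, v))"
proof -
  from f have f' [hom]: "f \<in> Hom C A B" and [hom]: "A \<in> Obj C" "B \<in> Obj C" "u \<in> Hom C (To A) A"
    and [hom]: "v \<in> Hom C (To B) B" and f_alg: "u \<cdot> f = Tm f \<cdot> v"
    and objs: "(A, u) \<in> Obj EM" "(B, v) \<in> Obj EM"
    by (simp_all add: em_Hom_iff em_Obj_iff)
  have "(lam A \<cdot> Bm u) \<cdot> Bm f = (lam A \<cdot> Bm (Tm f)) \<cdot> Bm v"
    by (subst comp_assoc Bm_comp[symmetric], (rule hom)+ | simp only: f_alg)+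
  also have "\<dots> = Tm (Bm f) \<cdot> (lam B \<cdot> Bm v)"
    by (simp only: lam_natural[OF f']) (subst comp_assoc, (rule hom)+ | rule refl)+
  finally show ?thesis
    using lift_algebra[OF objs(1)] lift_algebra[OF objs(2)] by (simp add: lift_pair em_Hom_iff hom)
qed

lemma dl_algebra_hom:
  assumes "(A, v) \<in> Obj EM"
  shows "dl A \<in> Hom EM (lift (A, v)) (lift (lift (A, v)))"
proof -
  from assms have [hom]: "A \<in> Obj C" and v [hom]: "v \<in> Hom C (To A) A"
    by (simp_all add: em_Obj_iff)
  have "(lam A \<cdot> Bm v) \<cdot> dl A = (lam A \<cdot> dl (To A)) \<cdot> Bm (Bm v)"
    by (subst comp_assoc, (rule hom)+ | simp only: dl_natural[OF v])+
  also have "\<dots> = Tm (dl A) \<cdot> (lam (Bo A) \<cdot> Bm (lam A \<cdot> Bm v))"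
    by (simp only: lam_dl[symmetric] hom) (subst comp_assoc Bm_comp, (rule hom)+ | rule refl)+
  finally show ?thesis
    using lift_algebra[OF assms] lift_algebra[OF lift_algebra[OF assms]]
    by (simp add: lift_pair em_Hom_iff hom)
qed

lemma ep_algebra_hom:
  assumes "(A, v) \<in> Obj EM"
  shows "ep A \<in> Hom EM (lift (A, v)) (A, v)"
proof -
  from assms have [hom]: "A \<in> Obj C" and v [hom]: "v \<in> Hom C (To A) A"
    by (simp_all add: em_Obj_iff)
  have "(lam A \<cdot> Bm v) \<cdot> ep A = (lam A \<cdot> ep (To A)) \<cdot> v"
    by (subst comp_assoc, (rule hom)+ | simp only: ep_natural[OF v, symmetric])+
  also have "\<dots> = Tm (ep A) \<cdot> v"
    by (simp only: lam_ep hom)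
  finally show ?thesis
    using lift_algebra[OF assms] assms by (simp add: lift_pair em_Hom_iff hom)
qed

lemma De_algebra_hom:
  assumes "(A, v) \<in> Obj EM"
  shows "De A \<in> Hom EM (lift (A, v)) (tns EM (lift (A, v)) (lift (A, v)))"
proof -
  from assms have [hom]: "A \<in> Obj C" and v [hom]: "v \<in> Hom C (To A) A"
    by (simp_all add: em_Obj_iff)
  have "(lam A \<cdot> Bm v) \<cdot> De A = (lam A \<cdot> De (To A)) \<cdot> (Bm v \<otimes> Bm v)"
    by (subst comp_assoc, (rule hom)+ | simp only: De_natural[OF v, symmetric])+
  also have "\<dots> = Tm (De A) \<cdot> (n (Bo A) (Bo A) \<cdot> ((lam A \<cdot> Bm v) \<otimes> (lam A \<cdot> Bm v)))"
    by (simp only: lam_De[symmetric] hom) (subst comp_assoc tnsm_comp, (rule hom)+ | rule refl)+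
  finally show ?thesis
    using lift_algebra[OF assms] tns_algebra[OF lift_algebra[OF assms] lift_algebra[OF assms]]
    by (simp add: lift_pair em_Hom_iff em_tns hom)
qed

lemma ee_algebra_hom:
  assumes "(A, v) \<in> Obj EM"
  shows "ee A \<in> Hom EM (lift (A, v)) (unt EM)"
proof -
  from assms have [hom]: "A \<in> Obj C" and v [hom]: "v \<in> Hom C (To A) A"
    by (simp_all add: em_Obj_iff)
  have "(lam A \<cdot> Bm v) \<cdot> ee A = lam A \<cdot> (ee (To A) \<cdot> idn C (unt C))"
    by (subst comp_assoc, (rule hom)+ | simp only: ee_natural[OF v])+
  also have "\<dots> = Tm (ee A) \<cdot> nK"
    by (simp only: comp_idn_right[OF ee_hom] lam_ee hom)
  finally show ?thesis
    using lift_algebra[OF assms] unt_algebra by (simp add: lift_pair em_Hom_iff em_unt hom)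
qed

lemma coalgebra_modality_em:
  "coalgebra_modality EM lift Bm (\<lambda>(A, v). dl A) (\<lambda>(A, v). ep A) (\<lambda>(A, v). De A) (\<lambda>(A, v). ee A)"
  unfolding coalgebra_modality_def nat_trans_def functor_on_def
  apply (intro conjI)
  subgoal by (simp add: lift_algebra)
  subgoal by (auto simp: split_paired_all intro: Bm_algebra_hom)
  subgoal by (auto simp: split_paired_all em_simps lift_pair Bm_idn dest: em_Obj_D)
  subgoal using Bm_comp[OF em_Hom_D em_Hom_D] by (simp add: em_simps)
  subgoal by (auto simp: split_paired_all intro: dl_algebra_hom)
  subgoal using dl_natural[OF em_Hom_D] by (auto simp: split_paired_all em_simps)
  subgoal by (auto simp: split_paired_all intro: ep_algebra_hom)
  subgoal using ep_natural[OF em_Hom_D] by (auto simp: split_paired_all em_simps)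
  subgoal by (auto simp: split_paired_all intro: De_algebra_hom)
  subgoal using De_natural[OF em_Hom_D] by (auto simp: split_paired_all em_simps)
  subgoal by (auto simp: split_paired_all intro: ee_algebra_hom)
  subgoal using ee_natural[OF em_Hom_D] by (auto simp: split_paired_all em_simps em_unt)
  subgoal by (auto simp: split_paired_all em_simps lift_pair coalgebra_laws dest!: em_Obj_D)
  done

end

locale lifted_deriving_transformation =
  lifted_coalgebra_modality C To Tm mu eta n nK Bo Bm dl ep De ee lam
  for C :: "('o,'m) smcat" and To Tm mu eta n nK Bo Bm dl ep De ee lam +
  fixes d :: "'o \<Rightarrow> 'm"
  assumes deriving_transformation: "deriving_transformation C Bo Bm dl ep De ee d"
begin

lemma d_hom [hom]: "A \<in> Obj C \<Longrightarrow> d A \<in> Hom C (tns C (Bo A) A) (Bo A)"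
  and d_natural: "f \<in> Hom C A B \<Longrightarrow> d A \<cdot> Bm f = (Bm f \<otimes> f) \<cdot> d B"
  using deriving_transformation unfolding deriving_transformation_def nat_trans_def by simp_all

lemma d_algebra_hom:
  assumes cond: "differential_mdl_cond C To Tm n Bo d lam" and "(A, v) \<in> Obj EM"
  shows "d A \<in> Hom EM (tns EM (lift (A, v)) (A, v)) (lift (A, v))"
proof -
  from assms(2) have A [hom]: "A \<in> Obj C" and v [hom]: "v \<in> Hom C (To A) A"
    by (simp_all add: em_Obj_iff)
  have "(n (Bo A) A \<cdot> ((lam A \<cdot> Bm v) \<otimes> v)) \<cdot> d A
      = n (Bo A) A \<cdot> ((lam A \<otimes> idn C (To A)) \<cdot> ((Bm v \<otimes> v) \<cdot> d A))"
    by (subst (2) comp_idn_left[OF v, symmetric], subst tnsm_comp, (rule hom)+)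
      (subst comp_assoc, (rule hom)+ | rule refl)+
  also have "\<dots> = (n (Bo A) A \<cdot> ((lam A \<otimes> idn C (To A)) \<cdot> d (To A))) \<cdot> Bm v"
    by (simp only: d_natural[OF v, symmetric]) (subst comp_assoc, (rule hom)+ | rule refl)+
  also have "\<dots> = Tm (d A) \<cdot> (lam A \<cdot> Bm v)"
    using cond A unfolding differential_mdl_cond_def by simp
      (subst comp_assoc, (rule hom)+ | rule refl)+
  finally show ?thesis
    by (intro em_HomI tns_algebra lift_algebra assms(2)) (simp_all add: lift_pair em_tns hom)
qed

lemma differential_law_from_free_algebra:
  assumes A [hom]: "A \<in> Obj C"
    and d_free: "d (To A) \<in> Hom EM (tns EM (lift (To A, mu A)) (To A, mu A)) (lift (To A, mu A))"
  shows "n (Bo A) A \<cdot> ((lam A \<otimes> idn C (To A)) \<cdot> d (To A)) = Tm (d A) \<cdot> lam A"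
proof -
  \<comment> \<open>the algebra-morphism law of d at the free algebra, precomposed with T(!eta (x) eta)\<close>
  let ?l = "lam (To A) \<cdot> Bm (mu A)"
  have "n (Bo (To A)) (To A) \<cdot> ((?l \<otimes> mu A) \<cdot> d (To A))
      = (n (Bo (To A)) (To A) \<cdot> (?l \<otimes> mu A)) \<cdot> d (To A)"
    by (subst comp_assoc, (rule hom)+ | rule refl)+
  also have "\<dots> = Tm (d (To A)) \<cdot> ?l"
    using d_free by (simp add: lift_pair em_tns em_Hom_iff)
  finally have free_law: "n (Bo (To A)) (To A) \<cdot> ((?l \<otimes> mu A) \<cdot> d (To A)) = Tm (d (To A)) \<cdot> ?l" .
  have "Tm (Bm (eta A)) \<cdot> ?l = (lam A \<cdot> Bm (Tm (eta A))) \<cdot> Bm (mu A)"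
    by (subst lam_natural, (rule hom)+) (subst comp_assoc, (rule hom)+ | rule refl)+
  also have "\<dots> = lam A"
    by (subst comp_assoc Bm_comp[symmetric], (rule hom)+)+
      (simp add: Tm_eta_mu Bm_idn[OF To_obj[OF A]] comp_idn_right[OF lam_hom[OF A]] A)
  finally have lam_unit: "Tm (Bm (eta A)) \<cdot> ?l = lam A" .
  have "n (Bo A) A \<cdot> ((lam A \<otimes> idn C (To A)) \<cdot> d (To A))
      = n (Bo A) A \<cdot> (((Tm (Bm (eta A)) \<otimes> Tm (eta A)) \<cdot> (?l \<otimes> mu A)) \<cdot> d (To A))"
    by (subst tnsm_comp[symmetric], (rule hom)+) (simp only: lam_unit Tm_eta_mu A)
  also have "\<dots> = (n (Bo A) A \<cdot> (Tm (Bm (eta A)) \<otimes> Tm (eta A))) \<cdot> ((?l \<otimes> mu A) \<cdot> d (To A))"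
    by (subst comp_assoc, (rule hom)+ | rule refl)+
  also have "\<dots> = Tm (Bm (eta A) \<otimes> eta A) \<cdot> (n (Bo (To A)) (To A) \<cdot> ((?l \<otimes> mu A) \<cdot> d (To A)))"
    by (simp only: n_natural[OF Bm_hom[OF eta_hom] eta_hom, symmetric] A)
      (subst comp_assoc, (rule hom)+ | rule refl)+
  also have "\<dots> = Tm ((Bm (eta A) \<otimes> eta A) \<cdot> d (To A)) \<cdot> ?l"
    by (simp only: free_law) (subst comp_assoc Tm_comp, (rule hom)+ | rule refl)+
  also have "\<dots> = Tm (d A) \<cdot> (Tm (Bm (eta A)) \<cdot> ?l)"
    by (subst d_natural[symmetric], (rule hom)+)
      (subst comp_assoc Tm_comp, (rule hom)+ | rule refl)+
  finally show ?thesis by (simp only: lam_unit)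
qed

lemma deriving_transformation_em_iff:
  assumes dt: "\<And>P. P \<in> Obj EM \<Longrightarrow> dt P = d (fst P)"
  shows "deriving_transformation EM lift Bm
      (\<lambda>(A, v). dl A) (\<lambda>(A, v). ep A) (\<lambda>(A, v). De A) (\<lambda>(A, v). ee A) dt
    \<longleftrightarrow> differential_mdl_cond C To Tm n Bo d lam"
proof
  assume "deriving_transformation EM lift Bm
      (\<lambda>(A, v). dl A) (\<lambda>(A, v). ep A) (\<lambda>(A, v). De A) (\<lambda>(A, v). ee A) dt"
  then have "dt P \<in> Hom EM (tns EM (lift P) P) (lift P)" if "P \<in> Obj EM" for P
    using that unfolding deriving_transformation_def nat_trans_def by blast
  then show "differential_mdl_cond C To Tm n Bo d lam"
    unfolding differential_mdl_cond_def
    using differential_law_from_free_algebra free_algebra dt by fastforce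
next
  assume cond: "differential_mdl_cond C To Tm n Bo d lam"
  note laws = deriving_transformation[unfolded deriving_transformation_def,
    THEN conjunct2, rule_format]
  show "deriving_transformation EM lift Bm
      (\<lambda>(A, v). dl A) (\<lambda>(A, v). ep A) (\<lambda>(A, v). De A) (\<lambda>(A, v). ee A) dt"
    unfolding deriving_transformation_def nat_trans_def
    apply (intro conjI)
    subgoal by (auto simp: split_paired_all dt d_algebra_hom[OF cond])
    subgoal using d_natural[OF em_Hom_D] by (auto simp: split_paired_all em_simps dt em_Hom_iff)
    subgoal
      by (simp add: Ball_def split_paired_All em_simps lift_pair dt lift_pair_algebra asc_inv_em)
        (auto dest!: em_Obj_D laws)
    done
qed

end

context comonoidal_monad
begin

lemma differential_mdl_bij_liftings:
  assumes cm: "coalgebra_modality C Bo Bm dl ep De ee"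
    and dC: "deriving_transformation C Bo Bm dl ep De ee d"
  shows "bij_betw (\<lambda>lam. (lam, \<lambda>P\<in>Obj EM. d (fst P)))
    {lam \<in> extensional (Obj C). differential_mdl C To Tm mu eta n nK Bo Bm dl ep De ee d lam}
    {(lam, dt). lam \<in> extensional (Obj C) \<and> coalg_mdl C To Tm mu eta n nK Bo Bm dl ep De ee lam \<and>
       dt \<in> extensional (Obj EM) \<and>
       deriving_transformation EM (lift_bang C Bo Bm lam) Bm
         (\<lambda>(A, v). dl A) (\<lambda>(A, v). ep A) (\<lambda>(A, v). De A) (\<lambda>(A, v). ee A) dt \<and>
       (\<forall>P\<in>Obj EM. dt P = d (fst P))}"
    (is "bij_betw ?pair ?DL ?LD")
proof -
  have lifting_iff: "deriving_transformation EM (lift_bang C Bo Bm lam) Bm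
      (\<lambda>(A, v). dl A) (\<lambda>(A, v). ep A) (\<lambda>(A, v). De A) (\<lambda>(A, v). ee A) dt
    \<longleftrightarrow> differential_mdl_cond C To Tm n Bo d lam"
    if "coalg_mdl C To Tm mu eta n nK Bo Bm dl ep De ee lam"
      "\<forall>P\<in>Obj EM. dt P = d (fst P)" for lam dt
  proof -
    interpret lifted_deriving_transformation C To Tm mu eta n nK Bo Bm dl ep De ee lam d
      using sc_monad cm that(1) dC by unfold_locales
    show ?thesis using that(2) by (intro deriving_transformation_em_iff) simp
  qed
  have "?LD = ?pair ` ?DL"
  proof
    show "?LD \<subseteq> ?pair ` ?DL"
    proof
      fix p assume "p \<in> ?LD"
      then obtain lam dt where p: "p = (lam, dt)" and "(lam, dt) \<in> ?LD" by fastforce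
      then have "dt = (\<lambda>P\<in>Obj EM. d (fst P))" and "lam \<in> ?DL"
        using lifting_iff by (auto simp: differential_mdl_def intro: extensionalityI)
      then show "p \<in> ?pair ` ?DL" by (simp add: p)
    qed
    show "?pair ` ?DL \<subseteq> ?LD"
      using lifting_iff by (auto simp: differential_mdl_def)
  qed
  then show ?thesis by (simp add: bij_betw_def inj_on_def)
qed

lemma differential_category_em:
  assumes "differential_category C Bo Bm dl ep De ee d" and "additive_functor C To Tm"
    and "differential_mdl C To Tm mu eta n nK Bo Bm dl ep De ee d lam"
  shows "differential_category EM (lift_bang C Bo Bm lam) Bm
    (\<lambda>(A, v). dl A) (\<lambda>(A, v). ep A) (\<lambda>(A, v). De A) (\<lambda>(A, v). ee A) (\<lambda>P\<in>Obj EM. d (fst P))"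
proof -
  from assms(1) have "additive C" "coalgebra_modality C Bo Bm dl ep De ee"
    "deriving_transformation C Bo Bm dl ep De ee d"
    by (simp_all add: differential_category_def additive_smc_def)
  moreover from assms(3) have "coalg_mdl C To Tm mu eta n nK Bo Bm dl ep De ee lam"
    and cond: "differential_mdl_cond C To Tm n Bo d lam"
    by (simp_all add: differential_mdl_def)
  ultimately interpret lifted_deriving_transformation C To Tm mu eta n nK Bo Bm dl ep De ee lam d
    using sc_monad by unfold_locales
  interpret additive_comonoidal_monad C To Tm mu eta n nK
    using sc_monad \<open>additive C\<close> assms(2) by unfold_locales
  show ?thesis
    unfolding differential_category_def additive_smc_def
    using smc_em additive_em coalgebra_modality_em
      deriving_transformation_em_iff[of "\<lambda>P\<in>Obj EM. d (fst P)"] cond by simp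
qed

end

theorem proposition7p15:
  fixes X :: "('o, 'm) smcat"
    and Bo :: "'o \<Rightarrow> 'o" and Bm :: "'m \<Rightarrow> 'm"
    and dl ep De ee d :: "'o \<Rightarrow> 'm"
    and To :: "'o \<Rightarrow> 'o" and Tm :: "'m \<Rightarrow> 'm"
    and mu eta :: "'o \<Rightarrow> 'm" and n :: "'o \<Rightarrow> 'o \<Rightarrow> 'm" and nK :: "'m"
  assumes "differential_category X Bo Bm dl ep De ee d"
    and "sc_monad X To Tm mu eta n nK"
    and "additive_functor X To Tm"
  defines "XT \<equiv> em X To Tm mu eta n nK"
  defines "DL \<equiv> {lam \<in> extensional (Obj X).
             differential_mdl X To Tm mu eta n nK Bo Bm dl ep De ee d lam}"
  defines "LD \<equiv> {(lam, dt). lam \<in> extensional (Obj X) \<and>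
             coalg_mdl X To Tm mu eta n nK Bo Bm dl ep De ee lam \<and>
             dt \<in> extensional (Obj XT) \<and>
             deriving_transformation XT (lift_bang X Bo Bm lam) Bm
               (\<lambda>(A, v). dl A) (\<lambda>(A, v). ep A) (\<lambda>(A, v). De A) (\<lambda>(A, v). ee A) dt \<and>
             (\<forall>Av\<in>Obj XT. dt Av = d (fst Av))}"
  shows "bij_betw (\<lambda>lam. (lam, \<lambda>Av\<in>Obj XT. d (fst Av))) DL LD \<and>
         (\<forall>lam\<in>DL. differential_category XT (lift_bang X Bo Bm lam) Bm
               (\<lambda>(A, v). dl A) (\<lambda>(A, v). ep A) (\<lambda>(A, v). De A) (\<lambda>(A, v). ee A)
               (\<lambda>Av\<in>Obj XT. d (fst Av)))"
proof -
  have smc: "smc X" and base: "coalgebra_modality X Bo Bm dl ep De ee"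
    "deriving_transformation X Bo Bm dl ep De ee d"
    using assms(1) by (simp_all add: differential_category_def additive_smc_def)
  interpret comonoidal_monad X To Tm mu eta n nK
    using smc assms(2) by unfold_locales
  show ?thesis
    unfolding XT_def DL_def LD_def
    using differential_mdl_bij_liftings[OF base] differential_category_em[OF assms(1,3)] by blast
qed

end
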